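(* Let $\mathfrak d=D(\mathfrak g,\mathfrak h)$ be a double extension (defined in the context), and suppose $\mathfrak h=\hat{\mathfrak h}\dotplus\check{\mathfrak h}$ as a vector space, where $\hat{\mathfrak h}$ is a Lie subalgebra of $\mathfrak h$. Choose bases $\{\hat H_{\hat\alpha}\}$ of $\hat{\mathfrak h}$ and $\{\check H_{\check\alpha}\}$ of $\check{\mathfrak h}$, and write the structure constants of $\mathfrak h$ and of its action on $\mathfrak g$ in this combined basis (so e.g. $f_{\hat\alpha\hat\beta}{}^{\check\gamma}=0$). Let $\{\hat H^{\hat\alpha},\check H^{\check\alpha}\}$ be the dual basis of $\mathfrak h^*$. Define the linear maps $T(\epsilon)$, $0<\epsilon\le 1$, on $\mathfrak d$ by $T(\epsilon)\check H_{\check\alpha}=\epsilon\,\check H_{\check\alpha}$, $T(\epsilon)\check H^{\check\alpha}=\epsilon^{-1}\check H^{\check\alpha}$, and $T(\epsilon)$ equal to the identity on $\mathfrak g$, on $\hat{\mathfrak h}$ and on $\operatorname{span}\{\hat H^{\hat\alpha}\}$. Then the limit $[x,y]_T=\lim_{\epsilon\to0}T(\epsilon)^{-1}[T(\epsilon)x,T(\epsilon)y]$ exists for all $x,y\in\mathfrak d$, and the contracted Lie algebra has the following nonzero brackets: $[G_i,G_j]=f_{ij}{}^kG_k+f_{\hat\alpha i}{}^k\Omega^{\mathfrak g}_{kj}\hat H^{\hat\alpha}$, $[\check H_{\check\alpha},\check H^{\check\beta}]=-f_{\check\alpha\hat\gamma}{}^{\check\beta}\hat H^{\hat\gamma}$,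 $[\hat H_{\hat\alpha},G_i]=f_{\hat\alpha i}{}^jG_j$, $[\hat H_{\hat\alpha},\check H_{\check\beta}]=f_{\hat\alpha\check\beta}{}^{\check\gamma}\check H_{\check\gamma}$, $[\hat H_{\hat\alpha},\check H^{\check\beta}]=-f_{\hat\alpha\check\gamma}{}^{\check\beta}\check H^{\check\gamma}$, $[\hat H_{\hat\alpha},\hat H_{\hat\beta}]=f_{\hat\alpha\hat\beta}{}^{\hat\gamma}\hat H_{\hat\gamma}$, $[\hat H_{\hat\alpha},\hat H^{\hat\beta}]=-f_{\hat\alpha\hat\gamma}{}^{\hat\beta}\hat H^{\hat\gamma}$ (in particular $[\check H_{\check\alpha},G_i]=0$ and $[\check H_{\check\alpha},\check H_{\check\beta}]=0$). Moreover, the symmetric bilinear form with nonzero entries $\langle G_i,G_j\rangle=\Omega^{\mathfrak g}_{ij}$, $\langle \hat H_{\hat\alpha},\hat H_{\hat\beta}\rangle=h_{\hat\alpha\hat\beta}$, $\langle\hat H_{\hat\alpha},\hat H^{\hat\beta}\rangle=\delta_{\hat\alpha}^{\hat\beta}$, $\langle\check H_{\check\alpha},\check H^{\check\beta}\rangle=\delta_{\check\alpha}^{\check\beta}$ (the $\epsilon\to0$ limit of the form $\langle T(\epsilon)x,T(\epsilon)y\rangle$) is an invariant metric on the contracted algebra, and the contracted algebra is a double extension $D(\mathfrak g\oplus D(0,\check{\mathfrak h}_T),\hat{\mathfrak h}_T)$, where $\check{\mathfrak h}_T$ is the abelian Lie algebra on the vector space $\check{\mathfrak h}$.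
   Context: An invariant metric on a real Lie algebra is a symmetric, nondegenerate bilinear form $\langle\cdot,\cdot\rangle$ with $\langle[Z,X],Y\rangle+\langle X,[Z,Y]\rangle=0$ for all $X,Y,Z$. Double extension (Medina–Revoy): let $\mathfrak g$ be a Lie algebra with basis $\{G_i\}$, brackets $[G_i,G_j]=f_{ij}{}^kG_k$ and invariant metric $\Omega^{\mathfrak g}_{ij}$; let $\mathfrak h$ be a Lie algebra with basis $\{H_\alpha\}$, $[H_\alpha,H_\beta]=f_{\alpha\beta}{}^\gamma H_\gamma$, acting on $\mathfrak g$ by derivations $H_\alpha\cdot G_i=f_{\alpha i}{}^jG_j$ that are antisymmetric with respect to $\Omega^{\mathfrak g}$ ($f_{\alpha i}{}^k\Omega^{\mathfrak g}_{kj}+f_{\alpha j}{}^k\Omega^{\mathfrak g}_{ki}=0$). Let $\{H^\alpha\}$ be the dual basis of $\mathfrak h^*$. The double extension $D(\mathfrak g,\mathfrak h)$ is the vector space $\mathfrak g\dotplus\mathfrak h\dotplus\mathfrak h^*$ with brackets $[G_i,G_j]=f_{ij}{}^kG_k+f_{\alpha i}{}^k\Omega^{\mathfrak g}_{kj}H^\alpha$, $[H_\alpha,G_i]=f_{\alpha i}{}^jG_j$, $[H_\alpha,H_\beta]=f_{\alpha\beta}{}^\gamma H_\gamma$, $[H_\alpha,H^\beta]=-f_{\alpha\gamma}{}^\beta H^\gamma$, $[H^\alpha,G_j]=[H^\alpha,H^\beta]=0$, and invariant metric $\langle G_i,G_j\rangle=\Omega^{\mathfrak g}_{ij}$, $\langle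 H_\alpha,H_\beta\rangle=h_{\alpha\beta}$, $\langle H_\alpha,H^\beta\rangle=\delta_\alpha^\beta$, all other entries zero, where $h_{\alpha\beta}$ is any (possibly degenerate) invariant symmetric bilinear form on $\mathfrak h$. $D(0,\mathfrak h)$ denotes the double extension of the trivial Lie algebra, i.e. $\mathfrak h^*\rtimes\mathfrak h$ with the coadjoint action. *)

theory Defs
  imports "HOL-Analysis.Analysis"
begin

text \<open>A finite-dimensional real Lie algebra with a chosen basis
indexed by a finite type 'l is given by structure constants c :: 'l => 'l => 'l => real,
[e_a, e_b] = sum_k c a b k e_k. Vectors are functions 'l => real (coordinates);
the product topology on 'l => real (Function_Topology) is the usual one.\<close>

definition br :: "('l::finite \<Rightarrow> 'l \<Rightarrow> 'l \<Rightarrow> real) \<Rightarrow> ('l \<Rightarrow> real) \<Rightarrow> ('l \<Rightarrow> real) \<Rightarrow> ('l \<Rightarrow> real)" where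
  "br c x y = (\<lambda>k. \<Sum>a\<in>UNIV. \<Sum>b\<in>UNIV. x a * y b * c a b k)"

definition bform :: "('l::finite \<Rightarrow> 'l \<Rightarrow> real) \<Rightarrow> ('l \<Rightarrow> real) \<Rightarrow> ('l \<Rightarrow> real) \<Rightarrow> real" where
  "bform B x y = (\<Sum>a\<in>UNIV. \<Sum>b\<in>UNIV. x a * B a b * y b)"

definition lie_sc :: "('l::finite \<Rightarrow> 'l \<Rightarrow> 'l \<Rightarrow> real) \<Rightarrow> bool" where
  "lie_sc c \<longleftrightarrow> (\<forall>a b k. c a b k = - c b a k) \<and>
     (\<forall>a b d m. (\<Sum>k\<in>UNIV. c a b k * c k d m + c b d k * c k a m + c d a k * c k b m) = 0)"

definition symmetric_form :: "('l \<Rightarrow> 'l \<Rightarrow> real) \<Rightarrow> bool" where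
  "symmetric_form B \<longleftrightarrow> (\<forall>a b. B a b = B b a)"

definition nondegenerate_form :: "('l::finite \<Rightarrow> 'l \<Rightarrow> real) \<Rightarrow> bool" where
  "nondegenerate_form B \<longleftrightarrow> (\<forall>x. (\<forall>y. bform B x y = 0) \<longrightarrow> x = (\<lambda>_. 0))"

definition invariant_form :: "('l::finite \<Rightarrow> 'l \<Rightarrow> 'l \<Rightarrow> real) \<Rightarrow> ('l \<Rightarrow> 'l \<Rightarrow> real) \<Rightarrow> bool" where
  "invariant_form c B \<longleftrightarrow> (\<forall>z x y. (\<Sum>k\<in>UNIV. c z x k * B k y) + (\<Sum>k\<in>UNIV. c z y k * B x k) = 0)"

definition invariant_metric :: "('l::finite \<Rightarrow> 'l \<Rightarrow> 'l \<Rightarrow> real) \<Rightarrow> ('l \<Rightarrow> 'l \<Rightarrow> real) \<Rightarrow> bool" where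
  "invariant_metric c B \<longleftrightarrow> symmetric_form B \<and> nondegenerate_form B \<and> invariant_form c B"

text \<open>Admissible data for a double extension D(g,h): (fg, Om) a metric Lie algebra,
fh a Lie algebra acting on g (H_a . G_i = sum_j fa a i j G_j) by Om-antisymmetric
derivations (a Lie algebra representation), and hf a symmetric invariant (possibly
degenerate) form on h.\<close>
definition dext_data ::
  "('i::finite \<Rightarrow> 'i \<Rightarrow> 'i \<Rightarrow> real) \<Rightarrow> ('i \<Rightarrow> 'i \<Rightarrow> real) \<Rightarrow>
   ('h::finite \<Rightarrow> 'h \<Rightarrow> 'h \<Rightarrow> real) \<Rightarrow> ('h \<Rightarrow> 'i \<Rightarrow> 'i \<Rightarrow> real) \<Rightarrow> ('h \<Rightarrow> 'h \<Rightarrow> real) \<Rightarrow> bool" where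
  "dext_data fg Om fh fa hf \<longleftrightarrow>
     lie_sc fg \<and> invariant_metric fg Om \<and> lie_sc fh \<and>
     (\<forall>a i j m. (\<Sum>k\<in>UNIV. fg i j k * fa a k m) =
                 (\<Sum>k\<in>UNIV. fa a i k * fg k j m) + (\<Sum>k\<in>UNIV. fa a j k * fg i k m)) \<and>
     (\<forall>a b i m. (\<Sum>g\<in>UNIV. fh a b g * fa g i m) =
                 (\<Sum>k\<in>UNIV. fa b i k * fa a k m) - (\<Sum>k\<in>UNIV. fa a i k * fa b k m)) \<and>
     (\<forall>a i j. (\<Sum>k\<in>UNIV. fa a i k * Om k j) + (\<Sum>k\<in>UNIV. fa a j k * Om k i) = 0) \<and>
     symmetric_form hf \<and> invariant_form fh hf"

text \<open>Double extension D(g,h). Basis labels: Inl i = G_i, Inr (Inl a) = H_a,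
Inr (Inr a) = H^a (dual basis).\<close>
definition dext_sc ::
  "('i::finite \<Rightarrow> 'i \<Rightarrow> 'i \<Rightarrow> real) \<Rightarrow> ('i \<Rightarrow> 'i \<Rightarrow> real) \<Rightarrow>
   ('h::finite \<Rightarrow> 'h \<Rightarrow> 'h \<Rightarrow> real) \<Rightarrow> ('h \<Rightarrow> 'i \<Rightarrow> 'i \<Rightarrow> real) \<Rightarrow>
   'i + ('h + 'h) \<Rightarrow> 'i + ('h + 'h) \<Rightarrow> 'i + ('h + 'h) \<Rightarrow> real" where
  "dext_sc fg Om fh fa x y z =
   (case (x, y, z) of
      (Inl i, Inl j, Inl k) \<Rightarrow> fg i j k
    | (Inl i, Inl j, Inr (Inr a)) \<Rightarrow> (\<Sum>k\<in>UNIV. fa a i k * Om k j)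
    | (Inr (Inl a), Inl i, Inl j) \<Rightarrow> fa a i j
    | (Inl i, Inr (Inl a), Inl j) \<Rightarrow> - fa a i j
    | (Inr (Inl a), Inr (Inl b), Inr (Inl g)) \<Rightarrow> fh a b g
    | (Inr (Inl a), Inr (Inr b), Inr (Inr g)) \<Rightarrow> - fh a g b
    | (Inr (Inr b), Inr (Inl a), Inr (Inr g)) \<Rightarrow> fh a g b
    | _ \<Rightarrow> 0)"

definition dext_metric ::
  "('i \<Rightarrow> 'i \<Rightarrow> real) \<Rightarrow> ('h \<Rightarrow> 'h \<Rightarrow> real) \<Rightarrow> 'i + ('h + 'h) \<Rightarrow> 'i + ('h + 'h) \<Rightarrow> real" where
  "dext_metric Om hf x y =
   (case (x, y) of
      (Inl i, Inl j) \<Rightarrow> Om i j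
    | (Inr (Inl a), Inr (Inl b)) \<Rightarrow> hf a b
    | (Inr (Inl a), Inr (Inr b)) \<Rightarrow> (if a = b then 1 else 0)
    | (Inr (Inr a), Inr (Inl b)) \<Rightarrow> (if a = b then 1 else 0)
    | _ \<Rightarrow> 0)"

text \<open>D(0,h) = h^* semidirect h with the coadjoint action (double extension of the trivial
Lie algebra). Labels: Inl a = H_a, Inr a = H^a.\<close>
definition dzero_sc :: "('h \<Rightarrow> 'h \<Rightarrow> 'h \<Rightarrow> real) \<Rightarrow> 'h + 'h \<Rightarrow> 'h + 'h \<Rightarrow> 'h + 'h \<Rightarrow> real" where
  "dzero_sc fh x y z =
   (case (x, y, z) of
      (Inl a, Inl b, Inl g) \<Rightarrow> fh a b g
    | (Inl a, Inr b, Inr g) \<Rightarrow> - fh a g b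
    | (Inr b, Inl a, Inr g) \<Rightarrow> fh a g b
    | _ \<Rightarrow> 0)"

definition dzero_metric :: "('h \<Rightarrow> 'h \<Rightarrow> real) \<Rightarrow> 'h + 'h \<Rightarrow> 'h + 'h \<Rightarrow> real" where
  "dzero_metric hf x y =
   (case (x, y) of
      (Inl a, Inl b) \<Rightarrow> hf a b
    | (Inl a, Inr b) \<Rightarrow> (if a = b then 1 else 0)
    | (Inr a, Inl b) \<Rightarrow> (if a = b then 1 else 0)
    | _ \<Rightarrow> 0)"

definition dsum_sc :: "('a \<Rightarrow> 'a \<Rightarrow> 'a \<Rightarrow> real) \<Rightarrow> ('b \<Rightarrow> 'b \<Rightarrow> 'b \<Rightarrow> real) \<Rightarrow> 'a + 'b \<Rightarrow> 'a + 'b \<Rightarrow> 'a + 'b \<Rightarrow> real" where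
  "dsum_sc c1 c2 x y z =
   (case (x, y, z) of
      (Inl a, Inl b, Inl d) \<Rightarrow> c1 a b d
    | (Inr a, Inr b, Inr d) \<Rightarrow> c2 a b d
    | _ \<Rightarrow> 0)"

definition dsum_metric :: "('a \<Rightarrow> 'a \<Rightarrow> real) \<Rightarrow> ('b \<Rightarrow> 'b \<Rightarrow> real) \<Rightarrow> 'a + 'b \<Rightarrow> 'a + 'b \<Rightarrow> real" where
  "dsum_metric B1 B2 x y =
   (case (x, y) of
      (Inl a, Inl b) \<Rightarrow> B1 a b
    | (Inr a, Inr b) \<Rightarrow> B2 a b
    | _ \<Rightarrow> 0)"

text \<open>Now h = hat h + check h with h-basis labelled by 'p + 'q: Inl p = hat H_p,
Inr q = check H_q. Labels of D(g,h): Inl i = G_i, Inr (Inl (Inl p)) = hat H_p,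
Inr (Inl (Inr q)) = check H_q, Inr (Inr (Inl p)) = hat H^p, Inr (Inr (Inr q)) = check H^q.\<close>
definition Tscale :: "real \<Rightarrow> 'i + (('p + 'q) + ('p + 'q)) \<Rightarrow> real" where
  "Tscale e l =
   (case l of
      Inr (Inl (Inr q)) \<Rightarrow> e
    | Inr (Inr (Inr q)) \<Rightarrow> inverse e
    | _ \<Rightarrow> 1)"

definition Tmap :: "real \<Rightarrow> ('i + (('p + 'q) + ('p + 'q)) \<Rightarrow> real) \<Rightarrow> ('i + (('p + 'q) + ('p + 'q)) \<Rightarrow> real)" where
  "Tmap e x = (\<lambda>l. Tscale e l * x l)"

definition Tinv :: "real \<Rightarrow> ('i + (('p + 'q) + ('p + 'q)) \<Rightarrow> real) \<Rightarrow> ('i + (('p + 'q) + ('p + 'q)) \<Rightarrow> real)" where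
  "Tinv e x = (\<lambda>l. x l / Tscale e l)"

definition contr_sc ::
  "('i::finite \<Rightarrow> 'i \<Rightarrow> 'i \<Rightarrow> real) \<Rightarrow> ('i \<Rightarrow> 'i \<Rightarrow> real) \<Rightarrow>
   ('p::finite + 'q::finite \<Rightarrow> 'p + 'q \<Rightarrow> 'p + 'q \<Rightarrow> real) \<Rightarrow> ('p + 'q \<Rightarrow> 'i \<Rightarrow> 'i \<Rightarrow> real) \<Rightarrow>
   'i + (('p + 'q) + ('p + 'q)) \<Rightarrow> 'i + (('p + 'q) + ('p + 'q)) \<Rightarrow> 'i + (('p + 'q) + ('p + 'q)) \<Rightarrow> real" where
  "contr_sc fg Om fh fa x y z =
   (case (x, y, z) of
    \<comment> \<open>[G_i,G_j] = f_ij^k G_k + f_{hat a i}^k Om_kj hat H^a\<close>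
      (Inl i, Inl j, Inl k) \<Rightarrow> fg i j k
    | (Inl i, Inl j, Inr (Inr (Inl a))) \<Rightarrow> (\<Sum>k\<in>UNIV. fa (Inl a) i k * Om k j)
    \<comment> \<open>[check H_a, check H^b] = - f_{check a, hat g}^{check b} hat H^g\<close>
    | (Inr (Inl (Inr a)), Inr (Inr (Inr b)), Inr (Inr (Inl g))) \<Rightarrow> - fh (Inr a) (Inl g) (Inr b)
    | (Inr (Inr (Inr b)), Inr (Inl (Inr a)), Inr (Inr (Inl g))) \<Rightarrow> fh (Inr a) (Inl g) (Inr b)
    \<comment> \<open>[hat H_a, G_i] = f_{hat a i}^j G_j\<close>
    | (Inr (Inl (Inl a)), Inl i, Inl j) \<Rightarrow> fa (Inl a) i j
    | (Inl i, Inr (Inl (Inl a)), Inl j) \<Rightarrow> - fa (Inl a) i j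
    \<comment> \<open>[hat H_a, check H_b] = f_{hat a check b}^{check g} check H_g\<close>
    | (Inr (Inl (Inl a)), Inr (Inl (Inr b)), Inr (Inl (Inr g))) \<Rightarrow> fh (Inl a) (Inr b) (Inr g)
    | (Inr (Inl (Inr b)), Inr (Inl (Inl a)), Inr (Inl (Inr g))) \<Rightarrow> - fh (Inl a) (Inr b) (Inr g)
    \<comment> \<open>[hat H_a, check H^b] = - f_{hat a check g}^{check b} check H^g\<close>
    | (Inr (Inl (Inl a)), Inr (Inr (Inr b)), Inr (Inr (Inr g))) \<Rightarrow> - fh (Inl a) (Inr g) (Inr b)
    | (Inr (Inr (Inr b)), Inr (Inl (Inl a)), Inr (Inr (Inr g))) \<Rightarrow> fh (Inl a) (Inr g) (Inr b)
    \<comment> \<open>[hat H_a, hat H_b] = f_{hat a hat b}^{hat g} hat H_g\<close>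
    | (Inr (Inl (Inl a)), Inr (Inl (Inl b)), Inr (Inl (Inl g))) \<Rightarrow> fh (Inl a) (Inl b) (Inl g)
    \<comment> \<open>[hat H_a, hat H^b] = - f_{hat a hat g}^{hat b} hat H^g\<close>
    | (Inr (Inl (Inl a)), Inr (Inr (Inl b)), Inr (Inr (Inl g))) \<Rightarrow> - fh (Inl a) (Inl g) (Inl b)
    | (Inr (Inr (Inl b)), Inr (Inl (Inl a)), Inr (Inr (Inl g))) \<Rightarrow> fh (Inl a) (Inl g) (Inl b)
    | _ \<Rightarrow> 0)"

definition contr_metric ::
  "('i \<Rightarrow> 'i \<Rightarrow> real) \<Rightarrow> ('p + 'q \<Rightarrow> 'p + 'q \<Rightarrow> real) \<Rightarrow>
   'i + (('p + 'q) + ('p + 'q)) \<Rightarrow> 'i + (('p + 'q) + ('p + 'q)) \<Rightarrow> real" where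
  "contr_metric Om hf x y =
   (case (x, y) of
      (Inl i, Inl j) \<Rightarrow> Om i j
    | (Inr (Inl (Inl a)), Inr (Inl (Inl b))) \<Rightarrow> hf (Inl a) (Inl b)
    | (Inr (Inl (Inl a)), Inr (Inr (Inl b))) \<Rightarrow> (if a = b then 1 else 0)
    | (Inr (Inr (Inl a)), Inr (Inl (Inl b))) \<Rightarrow> (if a = b then 1 else 0)
    | (Inr (Inl (Inr a)), Inr (Inr (Inr b))) \<Rightarrow> (if a = b then 1 else 0)
    | (Inr (Inr (Inr a)), Inr (Inl (Inr b))) \<Rightarrow> (if a = b then 1 else 0)
    | _ \<Rightarrow> 0)"

text \<open>Identification of the basis of D(g + D(0, check h_T), hat h_T), labelled by
('i + ('q + 'q)) + ('p + 'p), with the basis of the contracted algebra.\<close>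
definition relabel :: "('i + ('q + 'q)) + ('p + 'p) \<Rightarrow> 'i + (('p + 'q) + ('p + 'q))" where
  "relabel l =
   (case l of
      Inl (Inl i) \<Rightarrow> Inl i
    | Inl (Inr (Inl q)) \<Rightarrow> Inr (Inl (Inr q))
    | Inl (Inr (Inr q)) \<Rightarrow> Inr (Inr (Inr q))
    | Inr (Inl p) \<Rightarrow> Inr (Inl (Inl p))
    | Inr (Inr p) \<Rightarrow> Inr (Inr (Inl p)))"

end

theory Submission
  imports Defs
begin

text \<open>Under T(e) every bracket of D(g,h) between basis vectors is rescaled by a power of e.
Because hat h is a subalgebra, no power is negative, so the limit e \<rightarrow> 0 exists and keeps
exactly the brackets with exponent zero. Those are the brackets of the double extension of
g \<oplus> D(0, check h_T) by hat h_T, where hat h acts on g by restriction and on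
check h \<oplus> check h* by the induced action on h / hat h and its dual. The Medina-Revoy
construction always yields a Lie algebra with an invariant metric, and relabelling the basis
transports this structure to the contracted algebra.\<close>

section \<open>Structure constants and bilinear forms\<close>

lemma sum_UNIV_Plus:
  "(\<Sum>k\<in>(UNIV::('a::finite + 'b::finite) set). f k) = (\<Sum>k\<in>UNIV. f (Inl k)) + (\<Sum>k\<in>UNIV. f (Inr k))"
  by (subst UNIV_Plus_UNIV[symmetric], subst sum.Plus) auto

lemma sum_mult_delta [simp]:
  fixes f :: "'a::finite \<Rightarrow> real"
  shows "(\<Sum>k\<in>UNIV. f k * (if k = a then 1 else 0)) = f a"
    and "(\<Sum>k\<in>UNIV. f k * (if a = k then 1 else 0)) = f a"
  by (simp_all add: if_distrib[of "(*) _"] cong: if_cong)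

lemma plus3_induct:
  "(\<And>i. P (Inl i)) \<Longrightarrow> (\<And>a. P (Inr (Inl a))) \<Longrightarrow> (\<And>a. P (Inr (Inr a))) \<Longrightarrow> P x"
  by (metis sum.exhaust)

lemma plus5_induct:
  "(\<And>i. P (Inl i)) \<Longrightarrow> (\<And>a. P (Inr (Inl (Inl a)))) \<Longrightarrow> (\<And>a. P (Inr (Inl (Inr a))))
   \<Longrightarrow> (\<And>a. P (Inr (Inr (Inl a)))) \<Longrightarrow> (\<And>a. P (Inr (Inr (Inr a)))) \<Longrightarrow> P x"
  by (metis sum.exhaust)

lemma plus5'_induct:
  "(\<And>i. P (Inl (Inl i))) \<Longrightarrow> (\<And>a. P (Inl (Inr (Inl a)))) \<Longrightarrow> (\<And>a. P (Inl (Inr (Inr a))))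
   \<Longrightarrow> (\<And>a. P (Inr (Inl a))) \<Longrightarrow> (\<And>a. P (Inr (Inr a))) \<Longrightarrow> P x"
  by (metis sum.exhaust)

lemma nondegenerate_form_iff:
  fixes B :: "'l::finite \<Rightarrow> 'l \<Rightarrow> real"
  shows "nondegenerate_form B \<longleftrightarrow> (\<forall>x. (\<forall>l. (\<Sum>a\<in>UNIV. x a * B a l) = 0) \<longrightarrow> x = (\<lambda>_. 0))"
proof -
  have expand: "bform B x y = (\<Sum>b\<in>UNIV. (\<Sum>a\<in>UNIV. x a * B a b) * y b)" for x y
    unfolding bform_def by (subst sum.swap) (simp add: sum_distrib_right)
  have column: "bform B x (\<lambda>m. if m = l then 1 else 0) = (\<Sum>a\<in>UNIV. x a * B a l)" for x l
    unfolding bform_def by simp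
  have "(\<forall>y. bform B x y = 0) \<longleftrightarrow> (\<forall>l. (\<Sum>a\<in>UNIV. x a * B a l) = 0)" for x
  proof
    show "\<forall>l. (\<Sum>a\<in>UNIV. x a * B a l) = 0" if "\<forall>y. bform B x y = 0"
      using that column by metis
    show "\<forall>y. bform B x y = 0" if "\<forall>l. (\<Sum>a\<in>UNIV. x a * B a l) = 0"
      using that by (simp add: expand)
  qed
  then show ?thesis
    unfolding nondegenerate_form_def by simp
qed

lemma sum_UNIV_reindex_bij:
  fixes r :: "'a::finite \<Rightarrow> 'b::finite"
  assumes "bij r"
  shows "(\<Sum>k\<in>UNIV. g (r k)) = (\<Sum>k\<in>UNIV. g k)"
  using sum.reindex_bij_betw[OF assms] .

lemma lie_sc_zero: "lie_sc (\<lambda>(_::'a::finite) (_::'a) (_::'a). 0::real)"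
  by (simp add: lie_sc_def)

lemma lie_sc_pullback:
  fixes r :: "'a::finite \<Rightarrow> 'b::finite"
  assumes "bij r" and lie: "lie_sc c"
  shows "lie_sc (\<lambda>x y z. c (r x) (r y) (r z))"
  unfolding lie_sc_def
proof (intro conjI allI)
  fix a b k
  show "c (r a) (r b) (r k) = - c (r b) (r a) (r k)"
    using lie unfolding lie_sc_def by blast
next
  fix a b d m
  have "(\<Sum>k\<in>UNIV. c (r a) (r b) k * c k (r d) (r m) + c (r b) (r d) k * c k (r a) (r m)
      + c (r d) (r a) k * c k (r b) (r m)) = 0"
    using lie unfolding lie_sc_def by blast
  then show "(\<Sum>k\<in>UNIV. c (r a) (r b) (r k) * c (r k) (r d) (r m) + c (r b) (r d) (r k) * c (r k) (r a) (r m)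
      + c (r d) (r a) (r k) * c (r k) (r b) (r m)) = 0"
    using sum_UNIV_reindex_bij[OF assms(1), of "\<lambda>k. c (r a) (r b) k * c k (r d) (r m) + c (r b) (r d) k * c k (r a) (r m)
      + c (r d) (r a) k * c k (r b) (r m)"] by simp
qed

lemma invariant_metric_pullback:
  fixes r :: "'a::finite \<Rightarrow> 'b::finite"
  assumes "bij r" and metric: "invariant_metric c B"
  shows "invariant_metric (\<lambda>x y z. c (r x) (r y) (r z)) (\<lambda>x y. B (r x) (r y))"
proof -
  note reindex = sum_UNIV_reindex_bij[OF assms(1)]
  have r_inv: "r (inv r l) = l" and inv_r: "inv r (r a) = a" for l a
    using assms(1) by (simp_all add: bij_is_surj surj_f_inv_f bij_is_inj inv_f_f)
  have symmetric: "B a b = B b a" for a b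
    using metric unfolding invariant_metric_def symmetric_form_def by blast
  have invariant: "(\<Sum>k\<in>UNIV. c z x k * B k y) + (\<Sum>k\<in>UNIV. c z y k * B x k) = 0" for z x y
    using metric unfolding invariant_metric_def invariant_form_def by blast
  have nondeg: "\<forall>l. (\<Sum>a\<in>UNIV. x a * B a l) = 0 \<Longrightarrow> x = (\<lambda>_. 0)" for x
    using metric unfolding invariant_metric_def nondegenerate_form_iff by blast
  have "x = (\<lambda>_. 0)" if columns: "\<forall>l. (\<Sum>a\<in>UNIV. x a * B (r a) (r l)) = 0" for x
  proof -
    have rows: "(\<Sum>a\<in>UNIV. x (inv r a) * B a l) = 0" for l
      using reindex[of "\<lambda>a. x (inv r a) * B a l"] columns[rule_format, of "inv r l"] by (simp add: r_inv inv_r)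
    have "(\<lambda>a. x (inv r a)) = (\<lambda>_. 0)"
      by (rule nondeg) (simp add: rows)
    then show ?thesis
      by (metis inv_r)
  qed
  moreover have "(\<Sum>k\<in>UNIV. c (r z) (r x) (r k) * B (r k) (r y))
      + (\<Sum>k\<in>UNIV. c (r z) (r y) (r k) * B (r x) (r k)) = 0" for z x y
    using invariant[of "r z" "r x" "r y"]
      reindex[of "\<lambda>k. c (r z) (r x) k * B k (r y)"] reindex[of "\<lambda>k. c (r z) (r y) k * B (r x) k"]
    by simp
  ultimately show ?thesis
    unfolding invariant_metric_def symmetric_form_def invariant_form_def nondegenerate_form_iff
    using symmetric by blast
qed

section \<open>Orthogonal direct sums and D(0, h) for abelian h\<close>

lemma dzero_sc_zero: "dzero_sc (\<lambda>_ _ _. 0) = (\<lambda>_ _ _. 0)"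
  by (auto simp: fun_eq_iff dzero_sc_def split: sum.split)

lemma invariant_metric_dzero_zero:
  "invariant_metric (\<lambda>(_::'q::finite + 'q) (_::'q + 'q) (_::'q + 'q). 0::real) (dzero_metric (\<lambda>_ _. 0))"
proof -
  have "x = (\<lambda>_. 0)"
    if columns: "\<forall>l. (\<Sum>a\<in>UNIV. x a * dzero_metric (\<lambda>(_::'q) (_::'q). 0::real) a l) = 0" for x
  proof -
    have "x (Inl q) = 0" "x (Inr q) = 0" for q
      using columns[rule_format, of "Inr q"] columns[rule_format, of "Inl q"]
      by (simp_all add: sum_UNIV_Plus dzero_metric_def)
    then show ?thesis
      by (metis sum.exhaust)
  qed
  moreover have "dzero_metric (\<lambda>_ _. 0) a b = dzero_metric (\<lambda>_ _. 0) b a" for a b :: "'q + 'q"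
    by (cases a; cases b) (auto simp: dzero_metric_def)
  ultimately show ?thesis
    by (simp add: invariant_metric_def invariant_form_def symmetric_form_def nondegenerate_form_iff)
qed

lemma lie_sc_dsum:
  assumes "lie_sc c1" and "lie_sc c2"
  shows "lie_sc (dsum_sc c1 c2)"
  unfolding lie_sc_def
proof (intro conjI allI)
  fix a b k
  have antisym1: "c1 a b k = - c1 b a k" and antisym2: "c2 a' b' k' = - c2 b' a' k'" for a b k a' b' k'
    using assms unfolding lie_sc_def by blast+
  show "dsum_sc c1 c2 a b k = - dsum_sc c1 c2 b a k"
    apply (cases a; cases b; cases k)
    apply (simp_all add: dsum_sc_def)
    by (rule antisym1 antisym2)+
next
  fix a b d m
  have jacobi1: "(\<Sum>k\<in>UNIV. c1 a b k * c1 k d m + c1 b d k * c1 k a m + c1 d a k * c1 k b m) = 0" for a b d m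
    using assms(1) unfolding lie_sc_def by blast
  have jacobi2: "(\<Sum>k\<in>UNIV. c2 a b k * c2 k d m + c2 b d k * c2 k a m + c2 d a k * c2 k b m) = 0" for a b d m
    using assms(2) unfolding lie_sc_def by blast
  show "(\<Sum>k\<in>UNIV. dsum_sc c1 c2 a b k * dsum_sc c1 c2 k d m + dsum_sc c1 c2 b d k * dsum_sc c1 c2 k a m
          + dsum_sc c1 c2 d a k * dsum_sc c1 c2 k b m) = 0"
    by (cases a; cases b; cases d; cases m) (simp_all add: sum_UNIV_Plus dsum_sc_def jacobi1 jacobi2)
qed

lemma invariant_metric_dsum:
  assumes metric1: "invariant_metric c1 B1" and metric2: "invariant_metric c2 B2"
  shows "invariant_metric (dsum_sc c1 c2) (dsum_metric B1 B2)"
proof -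
  have "x = (\<lambda>_. 0)" if columns: "\<forall>l. (\<Sum>a\<in>UNIV. x a * dsum_metric B1 B2 a l) = 0" for x
  proof -
    have "(\<lambda>i. x (Inl i)) = (\<lambda>_. 0)" "(\<lambda>i. x (Inr i)) = (\<lambda>_. 0)"
      using metric1 metric2 columns[rule_format, of "Inl _"] columns[rule_format, of "Inr _"]
      by (simp_all add: invariant_metric_def nondegenerate_form_iff sum_UNIV_Plus dsum_metric_def)
    then show ?thesis
      by (metis sum.exhaust)
  qed
  moreover have "dsum_metric B1 B2 a b = dsum_metric B1 B2 b a" for a b
    using assms by (cases a; cases b) (simp_all add: dsum_metric_def invariant_metric_def symmetric_form_def)
  moreover have "(\<Sum>k\<in>UNIV. dsum_sc c1 c2 z x k * dsum_metric B1 B2 k y)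
      + (\<Sum>k\<in>UNIV. dsum_sc c1 c2 z y k * dsum_metric B1 B2 x k) = 0" for z x y
    using assms by (cases z; cases x; cases y)
      (simp_all add: sum_UNIV_Plus dsum_sc_def dsum_metric_def invariant_metric_def invariant_form_def)
  ultimately show ?thesis
    unfolding invariant_metric_def symmetric_form_def invariant_form_def nondegenerate_form_iff by blast
qed

section \<open>Double extensions are metric Lie algebras\<close>

locale double_extension =
  fixes fg :: "'i::finite \<Rightarrow> 'i \<Rightarrow> 'i \<Rightarrow> real" and Om :: "'i \<Rightarrow> 'i \<Rightarrow> real"
    and fh :: "'h::finite \<Rightarrow> 'h \<Rightarrow> 'h \<Rightarrow> real" and fa :: "'h \<Rightarrow> 'i \<Rightarrow> 'i \<Rightarrow> real"
    and hf :: "'h \<Rightarrow> 'h \<Rightarrow> real"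
  assumes data: "dext_data fg Om fh fa hf"
begin

lemma fg_lie: "lie_sc fg" and Om_metric: "invariant_metric fg Om" and fh_lie: "lie_sc fh"
  using data by (simp_all add: dext_data_def)

lemma fg_antisym: "fg a b k = - fg b a k"
  using fg_lie unfolding lie_sc_def by blast

lemma fg_jacobi:
  "(\<Sum>k\<in>UNIV. fg a b k * fg k d m) + (\<Sum>k\<in>UNIV. fg b d k * fg k a m) + (\<Sum>k\<in>UNIV. fg d a k * fg k b m) = 0"
proof -
  have "(\<Sum>k\<in>UNIV. fg a b k * fg k d m + fg b d k * fg k a m + fg d a k * fg k b m) = 0"
    using fg_lie unfolding lie_sc_def by blast
  then show ?thesis
    by (simp only: sum.distrib)
qed

lemma fh_antisym: "fh a b k = - fh b a k"
  using fh_lie unfolding lie_sc_def by blast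

lemma fh_jacobi:
  "(\<Sum>k\<in>UNIV. fh a b k * fh k d m) + (\<Sum>k\<in>UNIV. fh b d k * fh k a m) + (\<Sum>k\<in>UNIV. fh d a k * fh k b m) = 0"
proof -
  have "(\<Sum>k\<in>UNIV. fh a b k * fh k d m + fh b d k * fh k a m + fh d a k * fh k b m) = 0"
    using fh_lie unfolding lie_sc_def by blast
  then show ?thesis
    by (simp only: sum.distrib)
qed

lemma Om_sym: "Om a b = Om b a"
  using Om_metric by (simp add: invariant_metric_def symmetric_form_def)

lemma Om_invariant: "(\<Sum>k\<in>UNIV. fg z x k * Om k y) + (\<Sum>k\<in>UNIV. fg z y k * Om x k) = 0"
  using Om_metric by (simp add: invariant_metric_def invariant_form_def)

lemma action_derivation:
  "(\<Sum>k\<in>UNIV. fg i j k * fa a k m) = (\<Sum>k\<in>UNIV. fa a i k * fg k j m) + (\<Sum>k\<in>UNIV. fa a j k * fg i k m)"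
  using data by (simp add: dext_data_def)

lemma action_derivation':
  "(\<Sum>k\<in>UNIV. fg i j k * fa a k m) = (\<Sum>k\<in>UNIV. fa a i k * fg k j m) - (\<Sum>k\<in>UNIV. fa a j k * fg k i m)"
  by (subst action_derivation) (subst fg_antisym[of i], simp add: sum_negf)

lemma action_representation:
  "(\<Sum>g\<in>UNIV. fh a b g * fa g i m) = (\<Sum>k\<in>UNIV. fa b i k * fa a k m) - (\<Sum>k\<in>UNIV. fa a i k * fa b k m)"
  using data by (simp add: dext_data_def)

lemma action_skew: "(\<Sum>k\<in>UNIV. fa a i k * Om k j) + (\<Sum>k\<in>UNIV. fa a j k * Om k i) = 0"
  using data by (simp add: dext_data_def)

lemma hf_sym: "hf a b = hf b a"
  using data by (simp add: dext_data_def symmetric_form_def)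

lemma hf_invariant: "(\<Sum>k\<in>UNIV. fh z x k * hf k y) + (\<Sum>k\<in>UNIV. fh z y k * hf x k) = 0"
  using data by (simp add: dext_data_def invariant_form_def)

text \<open>The coefficient of H^a in [G_i, G_j].\<close>
definition cocyc :: "'h \<Rightarrow> 'i \<Rightarrow> 'i \<Rightarrow> real" where
  "cocyc a i j = (\<Sum>k\<in>UNIV. fa a i k * Om k j)"

lemma cocyc_antisym: "cocyc a i j = - cocyc a j i"
  using action_skew[of a i j] by (simp add: cocyc_def)

lemma cocyc_swap: "(\<Sum>l\<in>UNIV. fa x p l * cocyc y l q) = (\<Sum>k\<in>UNIV. fa y q k * cocyc x k p)"
proof -
  have "(\<Sum>l\<in>UNIV. fa x p l * cocyc y l q) = - (\<Sum>l\<in>UNIV. \<Sum>m\<in>UNIV. fa x p l * fa y q m * Om m l)"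
    by (subst cocyc_antisym) (simp add: cocyc_def sum_distrib_left sum_negf mult.assoc)
  also have "\<dots> = - (\<Sum>m\<in>UNIV. \<Sum>l\<in>UNIV. fa y q m * fa x p l * Om l m)"
    by (subst sum.swap) (simp add: mult_ac Om_sym)
  also have "\<dots> = (\<Sum>k\<in>UNIV. fa y q k * cocyc x k p)"
    by (subst cocyc_antisym) (simp add: cocyc_def sum_distrib_left sum_negf mult.assoc)
  finally show ?thesis .
qed

lemma cocyc_representation:
  "(\<Sum>g\<in>UNIV. fh x y g * cocyc g i j) = (\<Sum>l\<in>UNIV. fa y i l * cocyc x l j) - (\<Sum>l\<in>UNIV. fa x i l * cocyc y l j)"
proof -
  have "(\<Sum>g\<in>UNIV. fh x y g * cocyc g i j) = (\<Sum>k\<in>UNIV. (\<Sum>g\<in>UNIV. fh x y g * fa g i k) * Om k j)"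
    by (simp add: cocyc_def sum_distrib_left sum_distrib_right mult.assoc) (subst sum.swap, simp)
  also have "\<dots> = (\<Sum>k\<in>UNIV. ((\<Sum>l\<in>UNIV. fa y i l * fa x l k) - (\<Sum>l\<in>UNIV. fa x i l * fa y l k)) * Om k j)"
    by (simp add: action_representation)
  also have "\<dots> = (\<Sum>l\<in>UNIV. fa y i l * cocyc x l j) - (\<Sum>l\<in>UNIV. fa x i l * cocyc y l j)"
    by (simp add: cocyc_def left_diff_distrib sum_subtractf sum_distrib_left sum_distrib_right mult.assoc)
       (subst (1 2) sum.swap, simp)
  finally show ?thesis .
qed

lemma cocyc_equivariant:
  "(\<Sum>k\<in>UNIV. cocyc k q p * fh x y k) - (\<Sum>k\<in>UNIV. fa x p k * cocyc y k q)
     + (\<Sum>k\<in>UNIV. fa x q k * cocyc y k p) = 0"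
  using cocyc_representation[of x y q p] cocyc_swap[of y q x p] by (simp add: mult.commute)

definition Om_bracket :: "'i \<Rightarrow> 'i \<Rightarrow> 'i \<Rightarrow> real" where
  "Om_bracket u v z = (\<Sum>m\<in>UNIV. fg u v m * Om m z)"

lemma Om_bracket_antisym: "Om_bracket u v z = - Om_bracket v u z"
  by (simp add: Om_bracket_def sum_negf[symmetric]) (metis fg_antisym mult_minus_left)

lemma Om_bracket_antisym': "Om_bracket u v z = - Om_bracket u z v"
  using Om_invariant[of u v z] by (simp add: Om_bracket_def Om_sym[of v] eq_neg_iff_add_eq_0)

lemma Om_bracket_cyclic: "Om_bracket u v z = Om_bracket v z u"
  by (metis Om_bracket_antisym Om_bracket_antisym' minus_minus)

text \<open>Each term of the cyclic sum is expanded twice: once with the derivation property and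
once with the invariance of \<open>\<Omega>\<close>; the six resulting terms cancel in pairs.\<close>
lemma cocyc_cocycle:
  "(\<Sum>k\<in>UNIV. fg x y k * cocyc a k z) + (\<Sum>k\<in>UNIV. fg y z k * cocyc a k x)
     + (\<Sum>k\<in>UNIV. fg z x k * cocyc a k y) = 0"
proof -
  define T where "T x y z = (\<Sum>k\<in>UNIV. fa a x k * Om_bracket k y z)" for x y z
  define P where "P x y z = (\<Sum>k\<in>UNIV. fg x y k * cocyc a k z)" for x y z
  have by_derivation: "P x y z = T x y z + T y z x" for x y z
  proof -
    have "P x y z = (\<Sum>m\<in>UNIV. (\<Sum>k\<in>UNIV. fg x y k * fa a k m) * Om m z)"
      by (simp add: P_def cocyc_def sum_distrib_left sum_distrib_right mult.assoc) (subst sum.swap, simp)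
    also have "\<dots> = (\<Sum>m\<in>UNIV. ((\<Sum>k\<in>UNIV. fa a x k * fg k y m) + (\<Sum>k\<in>UNIV. fa a y k * fg x k m)) * Om m z)"
      by (simp add: action_derivation)
    also have "\<dots> = T x y z + (\<Sum>k\<in>UNIV. fa a y k * Om_bracket x k z)"
      by (simp add: T_def Om_bracket_def distrib_right sum.distrib sum_distrib_left sum_distrib_right mult.assoc)
         (subst (1 2) sum.swap, simp)
    finally show ?thesis
      by (simp add: T_def Om_bracket_cyclic[of x])
  qed
  have by_invariance: "P x y z = - T z x y" for x y z
  proof -
    have "P x y z = - (\<Sum>k\<in>UNIV. \<Sum>m\<in>UNIV. fg x y k * fa a z m * Om m k)"
      unfolding P_def by (subst cocyc_antisym) (simp add: cocyc_def sum_distrib_left sum_negf mult.assoc)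
    also have "\<dots> = - (\<Sum>m\<in>UNIV. fa a z m * Om_bracket x y m)"
      by (subst sum.swap) (simp add: Om_bracket_def sum_distrib_left mult_ac Om_sym)
    finally show ?thesis
      by (simp add: T_def) (metis Om_bracket_cyclic)
  qed
  have "P x y z + P y z x + P z x y = 0"
    using by_derivation[of x y z] by_derivation[of y z x] by_derivation[of z x y]
      by_invariance[of x y z] by_invariance[of y z x] by_invariance[of z x y]
    by linarith
  then show ?thesis
    by (simp add: P_def)
qed

lemma fh_coadjoint_jacobi:
  "- (\<Sum>k\<in>UNIV. fh x y k * fh k u v) - (\<Sum>k\<in>UNIV. fh y k v * fh x u k) + (\<Sum>k\<in>UNIV. fh x k v * fh y u k) = 0"
proof -
  have "(\<Sum>k\<in>UNIV. fh x k v * fh y u k) = - (\<Sum>k\<in>UNIV. fh y u k * fh k x v)"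
    by (subst fh_antisym[of x]) (simp add: sum_negf mult_ac)
  moreover have "(\<Sum>k\<in>UNIV. fh y k v * fh x u k) = (\<Sum>k\<in>UNIV. fh u x k * fh k y v)"
    by (subst fh_antisym[of y], subst fh_antisym[of x]) (simp add: mult_ac)
  ultimately show ?thesis
    using fh_jacobi[of x y u v] by linarith
qed

lemma lie_sc_dext: "lie_sc (dext_sc fg Om fh fa)"
  unfolding lie_sc_def
proof (intro conjI allI)
  fix a b k show "dext_sc fg Om fh fa a b k = - dext_sc fg Om fh fa b a k"
    apply (induct a rule: plus3_induct; induct b rule: plus3_induct; induct k rule: plus3_induct)
    apply (simp_all add: dext_sc_def flip: cocyc_def)
    by (rule fg_antisym cocyc_antisym fh_antisym)+
next
  fix a b d m
  show "(\<Sum>k\<in>UNIV. dext_sc fg Om fh fa a b k * dext_sc fg Om fh fa k d m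
          + dext_sc fg Om fh fa b d k * dext_sc fg Om fh fa k a m
          + dext_sc fg Om fh fa d a k * dext_sc fg Om fh fa k b m) = 0"
    \<comment> \<open>Each label pattern with a nonvanishing Jacobiator is one of the identities above.\<close>
    apply (induct a rule: plus3_induct; induct b rule: plus3_induct;
           induct d rule: plus3_induct; induct m rule: plus3_induct)
    apply (simp_all add: sum_UNIV_Plus dext_sc_def sum.distrib sum_negf flip: cocyc_def)
    subgoal for m d b a using fg_jacobi[of a b d m] by linarith
    subgoal for m d b a using cocyc_cocycle[where x=a and y=b and z=d and a=m] by linarith
    subgoal for m d b a using action_derivation'[where i=a and j=b and m=m and a=d] by linarith
    subgoal for m d b a using cocyc_equivariant[where q=a and p=b and x=d and y=m] by linarith
    subgoal for m d b a using action_derivation'[where i=d and j=a and m=m and a=b] by linarith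
    subgoal for m d b a using cocyc_equivariant[where q=d and p=a and x=b and y=m] by linarith
    subgoal for m d b a using action_representation[where a=b and b=d and i=a and m=m] by linarith
    subgoal for m d b a using action_derivation'[where i=b and j=d and m=m and a=a] by linarith
    subgoal for m d b a using cocyc_equivariant[where q=b and p=d and x=a and y=m] by linarith
    subgoal for m d b a using action_representation[where a=d and b=a and i=b and m=m] by linarith
    subgoal for m d b a using action_representation[where a=a and b=b and i=d and m=m] by linarith
    subgoal for m d b a using fh_jacobi[of a b d m] by linarith
    subgoal for m d b a using fh_coadjoint_jacobi[where x=a and y=b and u=m and v=d] by linarith
    subgoal for m d b a using fh_coadjoint_jacobi[where x=d and y=a and u=m and v=b] by linarith
    subgoal for m d b a using fh_coadjoint_jacobi[where x=b and y=d and u=m and v=a] by linarith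
    done
qed

lemma invariant_metric_dext: "invariant_metric (dext_sc fg Om fh fa) (dext_metric Om hf)"
proof -
  have invariant: "invariant_form (dext_sc fg Om fh fa) (dext_metric Om hf)"
    unfolding invariant_form_def
  proof (intro allI)
    fix z x y
    show "(\<Sum>k\<in>UNIV. dext_sc fg Om fh fa z x k * dext_metric Om hf k y)
            + (\<Sum>k\<in>UNIV. dext_sc fg Om fh fa z y k * dext_metric Om hf x k) = 0"
      apply (induct z rule: plus3_induct; induct x rule: plus3_induct; induct y rule: plus3_induct)
      apply (simp_all add: sum_UNIV_Plus dext_sc_def dext_metric_def sum.distrib sum_negf
          Om_invariant hf_invariant)
      subgoal for y x z by (simp add: Om_sym[of x])
      subgoal for y x z using action_skew[of z x y] by (simp add: Om_sym[of x])
      subgoal for y x z using fh_antisym[of x y z] by simp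
      done
  qed
  have symmetric: "symmetric_form (dext_metric Om hf)"
    unfolding symmetric_form_def
    by (intro allI, induct_tac a rule: plus3_induct; induct_tac b rule: plus3_induct)
       (simp_all add: dext_metric_def Om_sym hf_sym)
  have "x = (\<lambda>_. 0)" if columns: "\<forall>l. (\<Sum>a\<in>UNIV. x a * dext_metric Om hf a l) = 0" for x
  proof -
    have h_coords: "x (Inr (Inl b)) = 0" for b
      using columns[rule_format, of "Inr (Inr b)"] by (simp add: sum_UNIV_Plus dext_metric_def)
    moreover have "x (Inr (Inr b)) = 0" for b
      using columns[rule_format, of "Inr (Inl b)"] by (simp add: sum_UNIV_Plus dext_metric_def h_coords)
    moreover have "(\<lambda>i. x (Inl i)) = (\<lambda>_. 0)"
      using Om_metric columns[rule_format, of "Inl _"]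
      by (simp add: invariant_metric_def nondegenerate_form_iff sum_UNIV_Plus dext_metric_def)
    ultimately have "x l = 0" for l
      by (induct l rule: plus3_induct) (simp_all add: fun_eq_iff)
    then show ?thesis
      by blast
  qed
  then show ?thesis
    using invariant symmetric by (simp add: invariant_metric_def nondegenerate_form_iff)
qed

end

section \<open>The contraction\<close>

lemma tendsto_componentwise_fun_iff:
  fixes f :: "'a \<Rightarrow> 'b \<Rightarrow> real"
  shows "(f \<longlongrightarrow> l) F \<longleftrightarrow> (\<forall>i. ((\<lambda>x. f x i) \<longlongrightarrow> l i) F)"
  using limitin_componentwise[of "\<lambda>i. euclidean" UNIV f l F]
  by (simp add: euclidean_product_topology)

text \<open>Substituting e = exp t lets the simplifier cancel e against inverse e without side
conditions.\<close>
lemma tendsto_at_right_0_via_exp: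
  fixes f :: "real \<Rightarrow> real"
  assumes "((\<lambda>t. f (exp t)) \<longlongrightarrow> l) at_bot"
  shows "(f \<longlongrightarrow> l) (at_right 0)"
proof -
  have "((\<lambda>x. f (exp (ln x))) \<longlongrightarrow> l) (at_right 0)"
    by (rule filterlim_compose[OF assms ln_at_0])
  moreover have "eventually (\<lambda>x. f (exp (ln x)) = f x) (at_right (0::real))"
    by (rule eventually_mono[OF eventually_at_right_less]) simp
  ultimately show ?thesis
    by (rule Lim_transform_eventually)
qed

lemma exp_tendsto_0_at_bot: "((\<lambda>t. exp t) \<longlongrightarrow> (0::real)) at_bot"
  using exp_at_bot by simp

lemma exp_sq_tendsto_0_at_bot: "((\<lambda>t. exp t * exp t) \<longlongrightarrow> (0::real)) at_bot"
  using tendsto_mult[OF exp_tendsto_0_at_bot exp_tendsto_0_at_bot] by simp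

lemma exp_mult_exp_tendsto_0_at_bot: "((\<lambda>t. exp t * c * exp t) \<longlongrightarrow> (0::real)) at_bot"
  using tendsto_mult_right_zero[OF exp_sq_tendsto_0_at_bot, of c] by (simp add: mult_ac)

lemma Tinv_br_Tmap:
  "Tinv e (br c (Tmap e x) (Tmap e y)) k =
     (\<Sum>a\<in>UNIV. \<Sum>b\<in>UNIV. x a * y b * (Tscale e a * Tscale e b / Tscale e k * c a b k))"
  unfolding Tinv_def br_def Tmap_def by (simp add: sum_divide_distrib mult_ac)

lemma bform_Tmap:
  "bform B (Tmap e x) (Tmap e y) = (\<Sum>a\<in>UNIV. \<Sum>b\<in>UNIV. x a * y b * (Tscale e a * B a b * Tscale e b))"
  unfolding bform_def Tmap_def by (simp add: mult_ac)

lemma bij_relabel: "bij (relabel :: ('i + ('q + 'q)) + ('p + 'p) \<Rightarrow> 'i + (('p + 'q) + ('p + 'q)))"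
proof (rule o_bij)
  let ?unlabel = "\<lambda>l :: 'i + (('p + 'q) + ('p + 'q)). case l of
      Inl i \<Rightarrow> Inl (Inl i)
    | Inr (Inl (Inl p)) \<Rightarrow> Inr (Inl p)
    | Inr (Inl (Inr q)) \<Rightarrow> Inl (Inr (Inl q))
    | Inr (Inr (Inl p)) \<Rightarrow> Inr (Inr p)
    | Inr (Inr (Inr q)) \<Rightarrow> Inl (Inr (Inr q))"
  show "?unlabel \<circ> relabel = id"
    by (rule ext, induct_tac x rule: plus5'_induct) (simp_all add: relabel_def)
  show "relabel \<circ> ?unlabel = id"
    by (rule ext, induct_tac x rule: plus5_induct) (simp_all add: relabel_def)
qed

text \<open>Action of hat h on g \<oplus> D(0, check h): on g by restriction, on check h by the induced
action on h / hat h, on check h* by its contragredient.\<close>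
definition contracted_action ::
  "('p::finite + 'q::finite \<Rightarrow> 'p + 'q \<Rightarrow> 'p + 'q \<Rightarrow> real) \<Rightarrow> ('p + 'q \<Rightarrow> 'i \<Rightarrow> 'i \<Rightarrow> real) \<Rightarrow>
   'p \<Rightarrow> 'i + ('q + 'q) \<Rightarrow> 'i + ('q + 'q) \<Rightarrow> real" where
  "contracted_action fh fa p x y = (case (x, y) of
      (Inl i, Inl j) \<Rightarrow> fa (Inl p) i j
    | (Inr (Inl q), Inr (Inl r)) \<Rightarrow> fh (Inl p) (Inr q) (Inr r)
    | (Inr (Inr q), Inr (Inr r)) \<Rightarrow> - fh (Inl p) (Inr r) (Inr q)
    | _ \<Rightarrow> 0)"

locale contraction = double_extension fg Om fh fa hf
  for fg :: "'i::finite \<Rightarrow> 'i \<Rightarrow> 'i \<Rightarrow> real" and Om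
    and fh :: "'p::finite + 'q::finite \<Rightarrow> 'p + 'q \<Rightarrow> 'p + 'q \<Rightarrow> real" and fa hf +
  assumes hat_subalgebra: "\<forall>a b c. fh (Inl a) (Inl b) (Inr c) = 0"
begin

abbreviation "fg_ext \<equiv> dsum_sc fg (dzero_sc (\<lambda>(_::'q) (_::'q) (_::'q). 0::real))"
abbreviation "Om_ext \<equiv> dsum_metric Om (dzero_metric (\<lambda>(_::'q) (_::'q). 0::real))"
abbreviation "fh_hat \<equiv> \<lambda>a b c. fh (Inl a) (Inl b) (Inl c)"
abbreviation "hf_hat \<equiv> \<lambda>a b. hf (Inl a) (Inl b)"

lemma fh_hat_hat_check [simp]: "fh (Inl a) (Inl b) (Inr c) = 0"
  using hat_subalgebra by blast

lemma fh_check_hat [simp]: "fh (Inr s) (Inl a) x = - fh (Inl a) (Inr s) x"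
  by (rule fh_antisym)

lemma check_representation:
  "(\<Sum>g\<in>UNIV. fh (Inl a) (Inl b) (Inl g) * fh (Inl g) (Inr q) (Inr r)) =
     (\<Sum>s\<in>UNIV. fh (Inl b) (Inr q) (Inr s) * fh (Inl a) (Inr s) (Inr r))
     - (\<Sum>s\<in>UNIV. fh (Inl a) (Inr q) (Inr s) * fh (Inl b) (Inr s) (Inr r))"
  using fh_jacobi[of "Inl a" "Inl b" "Inr q" "Inr r"] by (simp add: sum_UNIV_Plus sum_negf)

lemma dext_data_contracted: "dext_data fg_ext Om_ext fh_hat (contracted_action fh fa) hf_hat"
  unfolding dext_data_def
proof (intro conjI allI)
  show "lie_sc fg_ext"
    by (simp add: dzero_sc_zero lie_sc_dsum lie_sc_zero fg_lie)
  show "invariant_metric fg_ext Om_ext"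
    by (simp add: dzero_sc_zero invariant_metric_dsum invariant_metric_dzero_zero Om_metric)
  have "(\<Sum>k\<in>UNIV. fh_hat a b k * fh_hat k d m + fh_hat b d k * fh_hat k a m + fh_hat d a k * fh_hat k b m) = 0"
    for a b d m
    using fh_jacobi[of "Inl a" "Inl b" "Inl d" "Inl m"] by (simp add: sum_UNIV_Plus sum.distrib)
  then show "lie_sc fh_hat"
    unfolding lie_sc_def by (blast intro: fh_antisym)
  show "symmetric_form hf_hat"
    by (simp add: symmetric_form_def hf_sym)
  show "invariant_form fh_hat hf_hat"
    using hf_invariant[of "Inl _" "Inl _" "Inl _"] by (simp add: invariant_form_def sum_UNIV_Plus)
next
  fix a i j m
  show "(\<Sum>k\<in>UNIV. fg_ext i j k * contracted_action fh fa a k m) =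
          (\<Sum>k\<in>UNIV. contracted_action fh fa a i k * fg_ext k j m)
          + (\<Sum>k\<in>UNIV. contracted_action fh fa a j k * fg_ext i k m)"
    by (induct i rule: plus3_induct; induct j rule: plus3_induct; induct m rule: plus3_induct)
       (simp_all add: sum_UNIV_Plus dsum_sc_def dzero_sc_zero contracted_action_def action_derivation)
next
  fix a b i m
  show "(\<Sum>g\<in>UNIV. fh_hat a b g * contracted_action fh fa g i m) =
          (\<Sum>k\<in>UNIV. contracted_action fh fa b i k * contracted_action fh fa a k m)
          - (\<Sum>k\<in>UNIV. contracted_action fh fa a i k * contracted_action fh fa b k m)"
    apply (induct i rule: plus3_induct; induct m rule: plus3_induct)
    apply (simp_all add: sum_UNIV_Plus contracted_action_def)
    subgoal for m i using action_representation[of "Inl a" "Inl b" i m] by (simp add: sum_UNIV_Plus)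
    subgoal for r q using check_representation[of a b q r] by simp
    subgoal for r q using check_representation[of a b r q] by (simp add: sum_negf mult.commute)
    done
next
  fix a i j
  show "(\<Sum>k\<in>UNIV. contracted_action fh fa a i k * Om_ext k j)
          + (\<Sum>k\<in>UNIV. contracted_action fh fa a j k * Om_ext k i) = 0"
    using action_skew[of "Inl a"]
    by (induct i rule: plus3_induct; induct j rule: plus3_induct)
       (simp_all add: sum_UNIV_Plus contracted_action_def dsum_metric_def dzero_metric_def sum_negf)
qed

lemma contr_sc_relabel:
  "contr_sc fg Om fh fa (relabel a) (relabel b) (relabel c) =
     dext_sc fg_ext Om_ext fh_hat (contracted_action fh fa) a b c"
  by (induct a rule: plus5'_induct; induct b rule: plus5'_induct; induct c rule: plus5'_induct)
     (simp_all add: relabel_def contr_sc_def dext_sc_def dsum_sc_def dzero_sc_zero contracted_action_def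
       dsum_metric_def dzero_metric_def sum_UNIV_Plus sum_negf)

lemma contr_metric_relabel:
  "contr_metric Om hf (relabel a) (relabel b) = dext_metric Om_ext hf_hat a b"
  by (induct a rule: plus5'_induct; induct b rule: plus5'_induct)
     (simp_all add: relabel_def contr_metric_def dext_metric_def dsum_metric_def dzero_metric_def)

lemma tendsto_scaled_dext_sc:
  "((\<lambda>e. Tscale e a * Tscale e b / Tscale e k * dext_sc fg Om fh fa a b k)
     \<longlongrightarrow> contr_sc fg Om fh fa a b k) (at_right 0)"
  apply (rule tendsto_at_right_0_via_exp)
  apply (induct a rule: plus5_induct; induct b rule: plus5_induct; induct k rule: plus5_induct)
  apply (simp_all add: Tscale_def dext_sc_def contr_sc_def)
  by (auto simp: divide_inverse tendsto_minus_cancel_left[symmetric]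
      intro!: tendsto_mult_left_zero tendsto_mult_right_zero
        exp_tendsto_0_at_bot exp_sq_tendsto_0_at_bot exp_mult_exp_tendsto_0_at_bot)

lemma tendsto_scaled_dext_metric:
  "((\<lambda>e. Tscale e a * dext_metric Om hf a b * Tscale e b) \<longlongrightarrow> contr_metric Om hf a b) (at_right 0)"
  apply (rule tendsto_at_right_0_via_exp)
  apply (induct a rule: plus5_induct; induct b rule: plus5_induct)
  apply (simp_all add: Tscale_def dext_metric_def contr_metric_def)
  by (auto simp: divide_inverse intro!: tendsto_mult_left_zero tendsto_mult_right_zero
      exp_tendsto_0_at_bot exp_sq_tendsto_0_at_bot exp_mult_exp_tendsto_0_at_bot)

lemma tendsto_contracted_bracket:
  "((\<lambda>e. Tinv e (br (dext_sc fg Om fh fa) (Tmap e x) (Tmap e y))) \<longlongrightarrow> br (contr_sc fg Om fh fa) x y)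
     (at_right 0)"
  unfolding tendsto_componentwise_fun_iff Tinv_br_Tmap unfolding br_def
  by (intro allI tendsto_sum tendsto_mult_left tendsto_scaled_dext_sc)

lemma tendsto_contracted_form:
  "((\<lambda>e. bform (dext_metric Om hf) (Tmap e x) (Tmap e y)) \<longlongrightarrow> bform (contr_metric Om hf) x y) (at_right 0)"
proof -
  have "bform (contr_metric Om hf) x y = (\<Sum>a\<in>UNIV. \<Sum>b\<in>UNIV. x a * y b * contr_metric Om hf a b)"
    unfolding bform_def by (simp add: mult_ac)
  then show ?thesis
    unfolding bform_Tmap by (simp only:) (intro tendsto_sum tendsto_mult_left tendsto_scaled_dext_metric)
qed

lemma metric_lie_algebra_contracted:
  "lie_sc (contr_sc fg Om fh fa) \<and> invariant_metric (contr_sc fg Om fh fa) (contr_metric Om hf)"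
proof -
  interpret ext: double_extension fg_ext Om_ext fh_hat "contracted_action fh fa" hf_hat
    by (rule double_extension.intro, rule dext_data_contracted)
  define unlabel :: "'i + (('p + 'q) + ('p + 'q)) \<Rightarrow> ('i + ('q + 'q)) + ('p + 'p)"
    where "unlabel = inv relabel"
  have bij: "bij unlabel" and relabel_unlabel: "relabel (unlabel l) = l" for l
    using bij_imp_bij_inv[OF bij_relabel] surj_f_inv_f[OF bij_is_surj[OF bij_relabel]]
    by (simp_all add: unlabel_def)
  have "contr_sc fg Om fh fa = (\<lambda>x y z. dext_sc fg_ext Om_ext fh_hat (contracted_action fh fa)
          (unlabel x) (unlabel y) (unlabel z))"
    by (metis contr_sc_relabel relabel_unlabel)
  moreover have "contr_metric Om hf = (\<lambda>x y. dext_metric Om_ext hf_hat (unlabel x) (unlabel y))"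
    by (metis contr_metric_relabel relabel_unlabel)
  ultimately show ?thesis
    using lie_sc_pullback[OF bij ext.lie_sc_dext] invariant_metric_pullback[OF bij ext.invariant_metric_dext]
    by simp
qed

end

theorem theorem5p1:
  fixes fg :: "'i::finite \<Rightarrow> 'i \<Rightarrow> 'i \<Rightarrow> real" and Om :: "'i \<Rightarrow> 'i \<Rightarrow> real"
    and fh :: "'p::finite + 'q::finite \<Rightarrow> 'p + 'q \<Rightarrow> 'p + 'q \<Rightarrow> real"
    and fa :: "'p + 'q \<Rightarrow> 'i \<Rightarrow> 'i \<Rightarrow> real"
    and hf :: "'p + 'q \<Rightarrow> 'p + 'q \<Rightarrow> real"
  assumes data: "dext_data fg Om fh fa hf"
    and hat_subalg: "\<forall>a b c. fh (Inl a) (Inl b) (Inr c) = 0"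
  shows
    "(\<forall>x y. ((\<lambda>e. Tinv e (br (dext_sc fg Om fh fa) (Tmap e x) (Tmap e y)))
              \<longlongrightarrow> br (contr_sc fg Om fh fa) x y) (at_right 0))
   \<and> (\<forall>x y. ((\<lambda>e. bform (dext_metric Om hf) (Tmap e x) (Tmap e y))
              \<longlongrightarrow> bform (contr_metric Om hf) x y) (at_right 0))
   \<and> lie_sc (contr_sc fg Om fh fa)
   \<and> invariant_metric (contr_sc fg Om fh fa) (contr_metric Om hf)
   \<and> (\<exists>fa'. dext_data (dsum_sc fg (dzero_sc (\<lambda>_ _ _. 0)))
                       (dsum_metric Om (dzero_metric (\<lambda>_ _. 0)))
                       (\<lambda>a b c. fh (Inl a) (Inl b) (Inl c)) fa'
                       (\<lambda>a b. hf (Inl a) (Inl b))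
         \<and> (\<forall>a b c. contr_sc fg Om fh fa (relabel a) (relabel b) (relabel c) =
              dext_sc (dsum_sc fg (dzero_sc (\<lambda>_ _ _. 0))) (dsum_metric Om (dzero_metric (\<lambda>_ _. 0)))
                      (\<lambda>a b c. fh (Inl a) (Inl b) (Inl c)) fa' a b c)
         \<and> (\<forall>a b. contr_metric Om hf (relabel a) (relabel b) =
              dext_metric (dsum_metric Om (dzero_metric (\<lambda>_ _. 0))) (\<lambda>a b. hf (Inl a) (Inl b)) a b))"
proof -
  interpret contraction fg Om fh fa hf
    by (intro contraction.intro double_extension.intro contraction_axioms.intro data hat_subalg)
  show ?thesis
    using tendsto_contracted_bracket tendsto_contracted_form metric_lie_algebra_contracted
      dext_data_contracted contr_sc_relabel contr_metric_relabel
    by blast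
qed

end
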